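(* Let $G$ be a compact Hausdorff topological group and $X$ a $G$-connected Hausdorff $G$-space, and let $x,y\in X$ with $G_x\subseteq G_y$. Then there exists a $G$-homotopy $F\colon\mathcal{O}(x)\times I\to X$ such that $F_0$ is the inclusion $\mathcal{O}(x)\hookrightarrow X$ and $F_1(\mathcal{O}(x))\subseteq\mathcal{O}(y)$.
   Context: $G_x=\{g: gx=x\}$ is the isotropy group and $\mathcal{O}(x)=Gx$ the orbit of $x$. $X$ is $G$-connected if $X^H=\{x: hx=x\ \forall h\in H\}$ is path-connected for every closed subgroup $H$. A $G$-homotopy is a $G$-equivariant map $\mathcal{O}(x)\times I\to X$, with $G$ acting trivially on $I$ and diagonally on the product. *)

theory Defs
  imports "HOL-Analysis.Analysis" "HOL-Algebra.Group"
begin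

definition topological_group :: "('g, 'b) monoid_scheme \<Rightarrow> 'g topology \<Rightarrow> bool" where
  "topological_group G TG \<longleftrightarrow>
     group G \<and> topspace TG = carrier G \<and>
     continuous_map (prod_topology TG TG) TG (\<lambda>(a, b). a \<otimes>\<^bsub>G\<^esub> b) \<and>
     continuous_map TG TG (\<lambda>a. inv\<^bsub>G\<^esub> a)"

definition G_space ::
  "('g, 'b) monoid_scheme \<Rightarrow> 'g topology \<Rightarrow> 'x topology \<Rightarrow> ('g \<Rightarrow> 'x \<Rightarrow> 'x) \<Rightarrow> bool" where
  "G_space G TG TX act \<longleftrightarrow>
     topological_group G TG \<and>
     (\<forall>g\<in>carrier G. \<forall>x\<in>topspace TX. act g x \<in> topspace TX) \<and>
     (\<forall>x\<in>topspace TX. act \<one>\<^bsub>G\<^esub> x = x) \<and>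
     (\<forall>g\<in>carrier G. \<forall>h\<in>carrier G. \<forall>x\<in>topspace TX.
         act (g \<otimes>\<^bsub>G\<^esub> h) x = act g (act h x)) \<and>
     continuous_map (prod_topology TG TX) TX (\<lambda>(g, x). act g x)"

definition isotropy :: "('g, 'b) monoid_scheme \<Rightarrow> ('g \<Rightarrow> 'x \<Rightarrow> 'x) \<Rightarrow> 'x \<Rightarrow> 'g set" where
  "isotropy G act x = {g \<in> carrier G. act g x = x}"

definition orbit :: "('g, 'b) monoid_scheme \<Rightarrow> ('g \<Rightarrow> 'x \<Rightarrow> 'x) \<Rightarrow> 'x \<Rightarrow> 'x set" where
  "orbit G act x = (\<lambda>g. act g x) ` carrier G"

definition fixed_set :: "'x topology \<Rightarrow> ('g \<Rightarrow> 'x \<Rightarrow> 'x) \<Rightarrow> 'g set \<Rightarrow> 'x set" where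
  "fixed_set TX act H = {x \<in> topspace TX. \<forall>h\<in>H. act h x = x}"

definition G_connected ::
  "('g, 'b) monoid_scheme \<Rightarrow> 'g topology \<Rightarrow> 'x topology \<Rightarrow> ('g \<Rightarrow> 'x \<Rightarrow> 'x) \<Rightarrow> bool" where
  "G_connected G TG TX act \<longleftrightarrow>
     (\<forall>H. subgroup H G \<and> closedin TG H \<longrightarrow> path_connectedin TX (fixed_set TX act H))"

definition G_homotopy ::
  "('g, 'b) monoid_scheme \<Rightarrow> 'x topology \<Rightarrow> ('g \<Rightarrow> 'x \<Rightarrow> 'x) \<Rightarrow> 'x \<Rightarrow> ('x \<times> real \<Rightarrow> 'x) \<Rightarrow> bool" where
  "G_homotopy G TX act x F \<longleftrightarrow>
     continuous_map (prod_topology (subtopology TX (orbit G act x)) (top_of_set {0..1})) TX F \<and>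
     (\<forall>g\<in>carrier G. \<forall>z\<in>orbit G act x. \<forall>t\<in>{0..1}. F (act g z, t) = act g (F (z, t)))"

end

theory Submission
  imports Defs
begin

(* Since G_x \<subseteq> G_y, both x and y lie in the fixed set X^{G_x}; G_x is a closed subgroup
   (the action is continuous and points are closed), so G-connectedness yields a path p from x to y
   in X^{G_x}. The homotopy F(g x, t) = g p(t) is well defined because p(t) is fixed by G_x, is
   equivariant by construction, and is continuous because (g, t) \<mapsto> (g x, t) is a quotient map,
   being a continuous surjection from the compact space G \<times> I onto the Hausdorff space O(x) \<times> I. *)

lemma G_space_group: "G_space G TG TX act \<Longrightarrow> group G"
  and G_space_topspace: "G_space G TG TX act \<Longrightarrow> topspace TG = carrier G"
  by (auto simp: G_space_def topological_group_def)

lemma G_space_act_closed: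
  "\<lbrakk>G_space G TG TX act; g \<in> carrier G; z \<in> topspace TX\<rbrakk> \<Longrightarrow> act g z \<in> topspace TX"
  and G_space_act_one: "\<lbrakk>G_space G TG TX act; z \<in> topspace TX\<rbrakk> \<Longrightarrow> act \<one>\<^bsub>G\<^esub> z = z"
  and G_space_act_mult:
  "\<lbrakk>G_space G TG TX act; g \<in> carrier G; h \<in> carrier G; z \<in> topspace TX\<rbrakk>
     \<Longrightarrow> act (g \<otimes>\<^bsub>G\<^esub> h) z = act g (act h z)"
  and G_space_continuous_action:
  "G_space G TG TX act \<Longrightarrow> continuous_map (prod_topology TG TX) TX (\<lambda>(g, z). act g z)"
  by (auto simp: G_space_def)

lemma G_space_act_inv_left:
  assumes "G_space G TG TX act" "g \<in> carrier G" "z \<in> topspace TX"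
  shows "act (inv\<^bsub>G\<^esub> g) (act g z) = z"
proof -
  interpret group G using assms(1) by (rule G_space_group)
  show ?thesis
    using assms by (simp flip: G_space_act_mult add: G_space_act_one)
qed

lemma isotropy_subgroup:
  assumes "G_space G TG TX act" "x \<in> topspace TX"
  shows "subgroup (isotropy G act x) G"
proof -
  interpret group G using assms(1) by (rule G_space_group)
  show ?thesis
  proof
    show "inv\<^bsub>G\<^esub> a \<in> isotropy G act x" if "a \<in> isotropy G act x" for a
      using that G_space_act_inv_left[OF assms(1) _ assms(2), of a]
      by (auto simp: isotropy_def)
  qed (use assms in \<open>auto simp: isotropy_def G_space_act_one G_space_act_mult\<close>)
qed

lemma continuous_map_orbit_map:
  assumes "G_space G TG TX act" "x \<in> topspace TX"
  shows "continuous_map TG TX (\<lambda>g. act g x)"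
proof -
  have "continuous_map TG (prod_topology TG TX) (\<lambda>g. (g, x))"
    using assms(2) by (simp add: continuous_map_paired)
  from continuous_map_compose[OF this G_space_continuous_action[OF assms(1)]]
  show ?thesis by (simp add: o_def)
qed

lemma closedin_isotropy:
  assumes "G_space G TG TX act" "t1_space TX" "x \<in> topspace TX"
  shows "closedin TG (isotropy G act x)"
proof -
  have "closedin TX {x}"
    using assms(2,3) by (simp add: t1_space_closedin_singleton)
  then have "closedin TG {g \<in> topspace TG. act g x \<in> {x}}"
    by (rule closedin_continuous_map_preimage[OF continuous_map_orbit_map[OF assms(1,3)]])
  moreover have "{g \<in> topspace TG. act g x \<in> {x}} = isotropy G act x"
    by (auto simp: isotropy_def G_space_topspace[OF assms(1)])
  ultimately show ?thesis by simp
qed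

lemma act_eq_on_isotropy_fixed_set:
  assumes "G_space G TG TX act" "x \<in> topspace TX"
    and "g \<in> carrier G" "h \<in> carrier G" "act g x = act h x"
    and "z \<in> fixed_set TX act (isotropy G act x)"
  shows "act g z = act h z"
proof -
  interpret group G using assms(1) by (rule G_space_group)
  have z: "z \<in> topspace TX" using assms(6) by (simp add: fixed_set_def)
  have "act (inv\<^bsub>G\<^esub> g \<otimes>\<^bsub>G\<^esub> h) x = x"
    using assms(1-5) by (simp add: G_space_act_mult G_space_act_inv_left flip: assms(5))
  then have "inv\<^bsub>G\<^esub> g \<otimes>\<^bsub>G\<^esub> h \<in> isotropy G act x"
    using assms(3,4) by (simp add: isotropy_def)
  then have "act (inv\<^bsub>G\<^esub> g \<otimes>\<^bsub>G\<^esub> h) z = z"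
    using assms(6) by (simp add: fixed_set_def)
  then have "act g (act (inv\<^bsub>G\<^esub> g \<otimes>\<^bsub>G\<^esub> h) z) = act g z" by simp
  then show ?thesis
    using assms(1,3,4) z by (simp flip: G_space_act_mult add: m_assoc[symmetric])
qed

text \<open>The choice of g with g x = z is irrelevant only when p takes values in the fixed set of G_x.\<close>
definition equivariant_extension ::
  "('g, 'b) monoid_scheme \<Rightarrow> ('g \<Rightarrow> 'x \<Rightarrow> 'x) \<Rightarrow> 'x \<Rightarrow> ('t \<Rightarrow> 'x) \<Rightarrow> 'x \<times> 't \<Rightarrow> 'x" where
  "equivariant_extension G act x p =
     (\<lambda>(z, t). act (SOME g. g \<in> carrier G \<and> act g x = z) (p t))"

lemma equivariant_extension_orbit_point:
  assumes "G_space G TG TX act" "x \<in> topspace TX" "g \<in> carrier G"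
    and "p t \<in> fixed_set TX act (isotropy G act x)"
  shows "equivariant_extension G act x p (act g x, t) = act g (p t)"
proof -
  define h where "h = (SOME h. h \<in> carrier G \<and> act h x = act g x)"
  have "h \<in> carrier G \<and> act h x = act g x"
    unfolding h_def by (rule someI[of _ g]) (use assms(3) in auto)
  then have "act h (p t) = act g (p t)"
    using act_eq_on_isotropy_fixed_set[OF assms(1,2) _ assms(3) _ assms(4)] by blast
  then show ?thesis by (simp add: equivariant_extension_def h_def)
qed

lemma equivariant_extension_equivariant:
  assumes "G_space G TG TX act" "x \<in> topspace TX"
    and "p \<in> S \<rightarrow> fixed_set TX act (isotropy G act x)"
    and "g \<in> carrier G" "z \<in> orbit G act x" "t \<in> S"
  shows "equivariant_extension G act x p (act g z, t) = act g (equivariant_extension G act x p (z, t))"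
proof -
  interpret group G using assms(1) by (rule G_space_group)
  obtain k where k: "k \<in> carrier G" "z = act k x" using assms(5) by (auto simp: orbit_def)
  have "p t \<in> fixed_set TX act (isotropy G act x)" using assms(3,6) by blast
  then show ?thesis
    using k assms(1,2,4)
    by (simp add: equivariant_extension_orbit_point fixed_set_def
        flip: G_space_act_mult)
qed

lemma quotient_map_orbit_times:
  assumes "G_space G TG TX act" "x \<in> topspace TX"
    and "compact_space TG" "Hausdorff_space TX" "compact_space T" "Hausdorff_space T"
  shows "quotient_map (prod_topology TG T) (prod_topology (subtopology TX (orbit G act x)) T)
           (\<lambda>(g, t). (act g x, t))"
proof (rule continuous_imp_quotient_map)
  have "continuous_map (prod_topology TG T) TX (\<lambda>gt. act (fst gt) x)"
    using continuous_map_compose[OF continuous_map_fst continuous_map_orbit_map[OF assms(1,2)]]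
    by (simp add: o_def)
  moreover have "(\<lambda>gt. act (fst gt) x) \<in> topspace (prod_topology TG T) \<rightarrow> orbit G act x"
    by (auto simp: orbit_def G_space_topspace[OF assms(1)])
  ultimately show "continuous_map (prod_topology TG T)
      (prod_topology (subtopology TX (orbit G act x)) T) (\<lambda>(g, t). (act g x, t))"
    by (auto simp: case_prod_unfold continuous_map_paired continuous_map_in_subtopology
        continuous_map_snd)
  show "(\<lambda>(g, t). (act g x, t)) ` topspace (prod_topology TG T)
      = topspace (prod_topology (subtopology TX (orbit G act x)) T)"
    using G_space_act_closed[OF assms(1) _ assms(2)]
    by (auto simp: orbit_def G_space_topspace[OF assms(1)] image_iff)
qed (use assms in \<open>simp_all add: compact_space_prod_topology Hausdorff_space_prod_topology
                                  Hausdorff_space_subtopology\<close>)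

lemma continuous_map_equivariant_extension:
  assumes "G_space G TG TX act" "x \<in> topspace TX"
    and "compact_space TG" "Hausdorff_space TX" "compact_space T" "Hausdorff_space T"
    and "continuous_map T TX p" "p \<in> topspace T \<rightarrow> fixed_set TX act (isotropy G act x)"
  shows "continuous_map (prod_topology (subtopology TX (orbit G act x)) T) TX
           (equivariant_extension G act x p)"
proof (rule continuous_compose_quotient_map[OF quotient_map_orbit_times[OF assms(1-6)]])
  have "continuous_map (prod_topology TG T) (prod_topology TG TX) (\<lambda>gt. (fst gt, p (snd gt)))"
    using continuous_map_compose[OF continuous_map_snd assms(7)] continuous_map_fst
    by (simp add: continuous_map_paired o_def) blast
  from continuous_map_compose[OF this G_space_continuous_action[OF assms(1)]]
  have "continuous_map (prod_topology TG T) TX (\<lambda>gt. act (fst gt) (p (snd gt)))"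
    by (simp add: o_def)
  then show "continuous_map (prod_topology TG T) TX
      (equivariant_extension G act x p \<circ> (\<lambda>(g, t). (act g x, t)))"
    by (rule continuous_map_eq)
      (use assms(8) in \<open>auto simp: G_space_topspace[OF assms(1)] Pi_iff
                                 equivariant_extension_orbit_point[OF assms(1,2)]\<close>)
qed

theorem lemma3p14:
  fixes G :: "('g, 'b) monoid_scheme" and TG :: "'g topology"
    and TX :: "'x topology" and act :: "'g \<Rightarrow> 'x \<Rightarrow> 'x" and x y :: 'x
  assumes "G_space G TG TX act"
    and "compact_space TG" and "Hausdorff_space TG"
    and "Hausdorff_space TX"
    and "G_connected G TG TX act"
    and "x \<in> topspace TX" and "y \<in> topspace TX"
    and "isotropy G act x \<subseteq> isotropy G act y"
  shows "\<exists>F. G_homotopy G TX act x F \<and>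
             (\<forall>z\<in>orbit G act x. F (z, 0) = z) \<and>
             (\<forall>z\<in>orbit G act x. F (z, 1) \<in> orbit G act y)"
proof -
  let ?H = "isotropy G act x"
  have "path_connectedin TX (fixed_set TX act ?H)"
    using assms(5) isotropy_subgroup[OF assms(1,6)]
      closedin_isotropy[OF assms(1) Hausdorff_imp_t1_space[OF assms(4)] assms(6)]
    by (simp add: G_connected_def)
  moreover have "x \<in> fixed_set TX act ?H" "y \<in> fixed_set TX act ?H"
    using assms(6-8) by (auto simp: fixed_set_def isotropy_def)
  ultimately obtain p where p: "pathin TX p" "p \<in> {0..1} \<rightarrow> fixed_set TX act ?H"
    "p 0 = x" "p 1 = y"
    unfolding path_connectedin by blast
  define F where "F = equivariant_extension G act x p"
  have continuous: "continuous_map (prod_topology (subtopology TX (orbit G act x)) (top_of_set {0..1})) TX F"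
    unfolding F_def
  proof (rule continuous_map_equivariant_extension[OF assms(1,6,2,4)])
    show "continuous_map (top_of_set {0..1}) TX p" using p(1) by (simp add: pathin_def)
  qed (use p(2) in \<open>auto simp: compact_space_subtopology Hausdorff_space_subtopology\<close>)
  have equivariant: "\<forall>g\<in>carrier G. \<forall>z\<in>orbit G act x. \<forall>t\<in>{0..1}. F (act g z, t) = act g (F (z, t))"
    unfolding F_def using equivariant_extension_equivariant[OF assms(1,6) p(2)] by blast
  have "G_homotopy G TX act x F"
    using continuous equivariant by (simp add: G_homotopy_def)
  moreover have "F (act g x, t) = act g (p t)" if "g \<in> carrier G" "t \<in> {0..1}" for g t
    unfolding F_def using p(2) that by (intro equivariant_extension_orbit_point[OF assms(1,6)]) auto
  ultimately show ?thesis
    using p(3,4) by (auto simp: orbit_def)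
qed

end
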